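(* Let $0<w_1<\dots<w_n$ be integers with $\sum_i w_i<2^n-1$, and let $2^{n/2}\le\Delta\le d<2^n$. Let $j\in\{0,\dots,n-1\}$ satisfy $\#\{t:f_t>2^j\}>\frac{\Delta}{2^{j+1}n}$. Set $h=2^j+1$, $m=\lceil \Delta/(2^{j+1}n)\rceil$ and $X=\{t: f_t\ge h\}$, so that $|X|\ge m$. Let $P$ be a parameter with $2\le P\le 2m$, and set $k=\lceil m/(4P)\rceil$. Choose a uniformly random prime $p\in[P,2P]$ and then a uniformly random $r^*\in\mathbb{Z}_p$. For $r\in\mathbb{Z}_p$ let $B_r=\{S\subseteq[n]: w(S)\equiv r\pmod p\}$. Then with probability at least $\Omega(1/n)$ over the choice of $p$ and $r^*$, there are at least $k$ integers $t\in\mathbb{N}$ with $\#\{S\in B_{r^*}: w(S)=t\}\ge h$.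
   Context: Write $[n]=\{1,\dots,n\}$ and $w(S)=\sum_{i\in S}w_i$. The frequency is $f_t=\#\{S\subseteq[n]:w(S)=t\}$. The parameter is $d=\sum_{0\le t<2^n}\max\{0,f_t-1\}$. The constant in $\Omega(\cdot)$ is absolute. *)

theory Defs
  imports Complex_Main "HOL-Computational_Algebra.Primes"
begin

definition wsum :: "(nat \<Rightarrow> nat) \<Rightarrow> nat set \<Rightarrow> nat" where
  "wsum w S = (\<Sum>i\<in>S. w i)"

definition freq :: "nat \<Rightarrow> (nat \<Rightarrow> nat) \<Rightarrow> nat \<Rightarrow> nat" where
  "freq n w t = card {S. S \<subseteq> {1..n} \<and> wsum w S = t}"

text \<open>d = sum over 0 <= t < 2^n of max(0, f_t - 1) (truncated nat subtraction)\<close>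
definition dpar :: "nat \<Rightarrow> (nat \<Rightarrow> nat) \<Rightarrow> nat" where
  "dpar n w = (\<Sum>t<2^n. freq n w t - 1)"

definition primes_in :: "real \<Rightarrow> nat set" where
  "primes_in P = {p. prime p \<and> P \<le> real p \<and> real p \<le> 2 * P}"

definition heavy_count :: "nat \<Rightarrow> (nat \<Rightarrow> nat) \<Rightarrow> nat \<Rightarrow> nat \<Rightarrow> nat \<Rightarrow> nat" where
  "heavy_count n w p r h =
     card {t. h \<le> card {S. S \<subseteq> {1..n} \<and> wsum w S mod p = r \<and> wsum w S = t}}"

definition success_prob :: "nat \<Rightarrow> (nat \<Rightarrow> nat) \<Rightarrow> real \<Rightarrow> nat \<Rightarrow> nat \<Rightarrow> real" where
  "success_prob n w P h k =
     (\<Sum>p\<in>primes_in P. real (card {r. r < p \<and> k \<le> heavy_count n w p r h}) / real p)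
       / real (card (primes_in P))"

end

theory Submission
  imports Defs "HOL-Analysis.Harmonic_Numbers"
begin

(*
  Let X be the set of heavy sums t, i.e. those with f_t >= h; it has at least m elements, all
  below 2^n. For a prime p let N_r be the number of t in X with t = r (mod p), and let
  Q_p = sum_r N_r^2 be the number of pairs in X x X that collide modulo p. Residues with N_r < k
  hold at most p (k - 1) <= |X|/2 elements, so by Cauchy-Schwarz at least |X|^2 / (4 Q_p)
  residues are good. Two distinct t, t' < 2^n agree modulo at most n log 2 / log P primes p >= P,
  hence sum_p Q_p <= |X| pi + |X|^2 n log 2 / log P, where pi is the number of primes in
  [P, 2P]. Cauchy-Schwarz over p bounds the average of |X|^2 / (8 P Q_p) from below by
  |X|^2 pi / (8 P sum_p Q_p), and Chebyshev's bound pi >= P / (7000 log P), obtained from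
  Erdos' proof of Bertrand's postulate, together with P <= 2 |X| makes this Omega(1/n).
*)

section \<open>Chebyshev's lower bound for the number of primes in [P, 2P]\<close>

lemma prime_nat_by_trial_division:
  fixes p b :: nat
  assumes "1 < p" and "p < b * b" and "\<forall>d\<in>set [2..<b]. \<not> d dvd p"
  shows "prime p"
proof (rule ccontr)
  assume "\<not> prime p"
  then obtain a where a: "a dvd p" "a \<noteq> 1" "a \<noteq> p"
    using assms(1) prime_nat_iff by blast
  then obtain c where p: "p = a * c" by (elim dvdE)
  have "p \<noteq> 0" using assms(1) by simp
  then have "a \<noteq> 0" "c \<noteq> 0" using p by auto
  have "c \<noteq> 1" using p a(3) by (intro notI) simp
  define e where "e = min a c"
  have "2 \<le> e" using a(2) \<open>a \<noteq> 0\<close> \<open>c \<noteq> 0\<close> \<open>c \<noteq> 1\<close> by (simp add: e_def)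
  have "e * e \<le> p" unfolding p e_def by (simp add: mult_mono)
  then have "e < b" using assms(2) by (meson le_less_trans mult_le_mono not_le)
  moreover have "e dvd p" unfolding e_def p by (simp add: min_def)
  ultimately show False using assms(3) \<open>2 \<le> e\<close> by auto
qed

lemma prod_prime_divisors_le:
  fixes D :: nat
  assumes "0 < D" and "\<And>p. p \<in> S \<Longrightarrow> prime p \<and> p dvd D"
  shows "\<Prod>S \<le> D"
proof -
  have S: "S \<subseteq> prime_factors D" using assms by (auto simp: prime_factors_dvd)
  have "\<Prod>S \<le> (\<Prod>p\<in>S. p ^ multiplicity p D)"
    using S by (intro prod_mono) (auto simp: prime_factors_multiplicity intro!: self_le_power prime_ge_1_nat)
  also have "\<dots> \<le> D"
  proof -
    have "(\<Prod>p\<in>S. p ^ multiplicity p D) dvd (\<Prod>p\<in>prime_factors D. p ^ multiplicity p D)"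
      using S by (intro prod_dvd_prod_subset) auto
    then show ?thesis using prime_factorization_nat[OF assms(1)] assms(1) by (metis dvd_imp_le)
  qed
  finally show ?thesis .
qed

lemma multiplicity_eq_card_prime_power_dvd:
  fixes p m K :: nat
  assumes "prime p" and "0 < m" and "m \<le> K"
  shows "multiplicity p m = card {i\<in>{1..K}. p ^ i dvd m}"
proof -
  have "{i\<in>{1..K}. p ^ i dvd m} = {1..multiplicity p m}"
  proof (intro equalityI subsetI)
    fix i assume "i \<in> {i\<in>{1..K}. p ^ i dvd m}"
    then show "i \<in> {1..multiplicity p m}"
      using assms prime_gt_1_nat[OF assms(1)] multiplicity_geI[of m p i] by auto
  next
    fix i assume i: "i \<in> {1..multiplicity p m}"
    then have "p ^ i dvd m" by (intro multiplicity_dvd') auto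
    then have "p ^ i \<le> m" using assms(2) by (rule dvd_imp_le)
    moreover have "i < p ^ i" using prime_gt_1_nat[OF assms(1)] by (simp add: power_gt_expt)
    ultimately show "i \<in> {i\<in>{1..K}. p ^ i dvd m}" using i \<open>p ^ i dvd m\<close> assms(3) by auto
  qed
  then show ?thesis by simp
qed

text \<open>Legendre's formula; the range \<open>{1..K}\<close> may be taken as large as convenient.\<close>

lemma multiplicity_prime_fact:
  fixes p n K :: nat
  assumes "prime p" and "n \<le> K"
  shows "multiplicity p (fact n) = (\<Sum>i\<in>{1..K}. n div p ^ i)"
  using assms(2)
proof (induction n)
  case 0
  then show ?case by simp
next
  case (Suc n)
  have "multiplicity p (fact (Suc n) :: nat) = multiplicity p (Suc n) + multiplicity p (fact n :: nat)"
    unfolding fact_Suc of_nat_id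
    by (rule prime_elem_multiplicity_mult_distrib) (use assms(1) in auto)
  also have "multiplicity p (Suc n) = card {i\<in>{1..K}. p ^ i dvd Suc n}"
    using multiplicity_eq_card_prime_power_dvd[OF assms(1) _ Suc.prems] by simp
  also have "\<dots> = (\<Sum>i\<in>{1..K}. if p ^ i dvd Suc n then 1 else 0)"
    by (subst sum.inter_filter[symmetric]) auto
  also have "multiplicity p (fact n :: nat) = (\<Sum>i\<in>{1..K}. n div p ^ i)"
    using Suc by simp
  also have "(\<Sum>i\<in>{1..K}. if p ^ i dvd Suc n then 1 else 0) + \<dots> = (\<Sum>i\<in>{1..K}. Suc n div p ^ i)"
    unfolding sum.distrib[symmetric] by (intro sum.cong refl) (simp add: div_Suc mod_eq_0_iff_dvd)
  finally show ?case .
qed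

lemma mult_2_div_bounds:
  fixes N q :: nat
  shows "2 * (N div q) \<le> 2 * N div q" and "2 * N div q \<le> 2 * (N div q) + 1"
proof -
  have "2 * N div q = 2 * (N div q) + 2 * (N mod q) div q"
  proof (cases "q = 0")
    case False
    have "N = N mod q + N div q * q" by simp
    then have "2 * N = 2 * (N mod q) + 2 * (N div q) * q" by (metis distrib_left mult.assoc)
    then show ?thesis using div_mult_self1[OF False, of "2 * (N mod q)" "2 * (N div q)"] by simp
  qed simp
  moreover have "2 * (N mod q) div q \<le> 1"
  proof (cases "q = 0")
    case False
    then have "2 * (N mod q) < 2 * q" by simp
    then show ?thesis using less_mult_imp_div_less[of "2 * (N mod q)" 2 q] by simp
  qed simp
  ultimately show "2 * (N div q) \<le> 2 * N div q" and "2 * N div q \<le> 2 * (N div q) + 1"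
    by simp_all
qed

lemma multiplicity_central_binomial:
  fixes p N :: nat
  assumes "prime p"
  shows "multiplicity p (2 * N choose N) = (\<Sum>i\<in>{1..2*N}. 2 * N div p ^ i - 2 * (N div p ^ i))"
proof -
  have fact_eq: "fact N * fact N * (2 * N choose N) = (fact (2 * N) :: nat)"
    using binomial_fact_lemma[of N "2 * N"] by simp
  have "multiplicity p (fact (2 * N) :: nat)
      = 2 * multiplicity p (fact N :: nat) + multiplicity p (2 * N choose N)"
    unfolding fact_eq[symmetric] using assms
    by (simp add: prime_elem_multiplicity_mult_distrib zero_less_binomial)
  then have "multiplicity p (2 * N choose N)
      = (\<Sum>i\<in>{1..2*N}. 2 * N div p ^ i) - (\<Sum>i\<in>{1..2*N}. 2 * (N div p ^ i))"
    using multiplicity_prime_fact[OF assms, of N "2 * N"] multiplicity_prime_fact[OF assms, of "2 * N" "2 * N"]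
    by (simp add: sum_distrib_left)
  also have "\<dots> = (\<Sum>i\<in>{1..2*N}. 2 * N div p ^ i - 2 * (N div p ^ i))"
    by (rule sum_subtractf_nat[symmetric]) (simp add: mult_2_div_bounds)
  finally show ?thesis .
qed

lemma multiplicity_central_binomial_large_prime:
  fixes p N :: nat
  assumes "prime p" and "2 * N < p * p"
  shows "multiplicity p (2 * N choose N) = 2 * N div p - 2 * (N div p)"
proof (cases "N = 0")
  case False
  have "multiplicity p (2 * N choose N) = (\<Sum>i\<in>{1..2*N}. if i = 1 then 2 * N div p - 2 * (N div p) else 0)"
    unfolding multiplicity_central_binomial[OF assms(1)]
  proof (intro sum.cong refl)
    fix i assume i: "i \<in> {1..2*N}"
    show "2 * N div p ^ i - 2 * (N div p ^ i) = (if i = 1 then 2 * N div p - 2 * (N div p) else 0)"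
    proof (cases "i = 1")
      case False
      then have "p ^ 2 \<le> p ^ i"
        using i prime_gt_0_nat[OF assms(1)] by (intro power_increasing) auto
      then have "2 * N < p ^ i" using assms(2) by (simp add: power2_eq_square)
      then show ?thesis using False by simp
    qed simp
  qed
  also have "\<dots> = 2 * N div p - 2 * (N div p)" using False by simp
  finally show ?thesis .
qed simp

lemma multiplicity_central_binomial_le_1:
  fixes p N :: nat
  assumes "prime p" and "2 * N < p * p"
  shows "multiplicity p (2 * N choose N) \<le> 1"
  using multiplicity_central_binomial_large_prime[OF assms] mult_2_div_bounds(2)[of N p] by simp

lemma multiplicity_central_binomial_eq_0:
  fixes p N :: nat
  assumes "prime p" and "2 < p" and "p \<le> N" and "2 * N < 3 * p"
  shows "multiplicity p (2 * N choose N) = 0"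
proof -
  have "3 * p \<le> p * p" using assms(2) by simp
  then have "2 * N < p * p" using assms(4) by linarith
  moreover have "N div p = 1" using assms(3,4) by (intro div_nat_eqI) auto
  moreover have "2 * N div p = 2" using assms(3,4) by (intro div_nat_eqI) auto
  ultimately show ?thesis using multiplicity_central_binomial_large_prime[OF assms(1)] by simp
qed

lemma prime_power_multiplicity_central_binomial_le:
  fixes p N :: nat
  assumes "prime p" and "0 < N"
  shows "p ^ multiplicity p (2 * N choose N) \<le> 2 * N"
proof (rule ccontr)
  define v where "v = multiplicity p (2 * N choose N)"
  assume "\<not> p ^ multiplicity p (2 * N choose N) \<le> 2 * N"
  then have big: "2 * N < p ^ v" unfolding v_def by simp
  then have "v \<noteq> 0" using assms(2) by (intro notI) simp
  have "v = (\<Sum>i\<in>{1..2*N}. 2 * N div p ^ i - 2 * (N div p ^ i))"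
    unfolding v_def by (rule multiplicity_central_binomial[OF assms(1)])
  also have "\<dots> \<le> (\<Sum>i\<in>{1..2*N}. if i < v then 1 else 0)"
  proof (intro sum_mono)
    fix i
    show "2 * N div p ^ i - 2 * (N div p ^ i) \<le> (if i < v then 1 else 0)"
    proof (cases "i < v")
      case False
      then have "p ^ v \<le> p ^ i" using prime_gt_0_nat[OF assms(1)] by (intro power_increasing) auto
      then show ?thesis using big False by simp
    qed (use mult_2_div_bounds(2)[of N "p ^ i"] in simp)
  qed
  also have "\<dots> = card {i\<in>{1..2*N}. i < v}"
    by (subst sum.inter_filter[symmetric]) auto
  also have "\<dots> \<le> card {1..<v}" by (intro card_mono) auto
  also have "\<dots> < v" using \<open>v \<noteq> 0\<close> by simp
  finally show False by simp
qed

lemma central_binomial_odd_le: "(2 * m + 1 choose m) \<le> 4 ^ m"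
proof -
  have "2 * (2 * m + 1 choose m) = (2 * m + 1 choose m) + (2 * m + 1 choose (m + 1))"
    using binomial_symmetric[of "m + 1" "2 * m + 1"] by simp
  also have "\<dots> = (\<Sum>k\<in>{m, m + 1}. 2 * m + 1 choose k)" by simp
  also have "\<dots> \<le> (\<Sum>k\<le>2 * m + 1. 2 * m + 1 choose k)" by (intro sum_mono2) auto
  also have "\<dots> = 2 ^ (2 * m + 1)" by (rule choose_row_sum)
  also have "\<dots> = 2 * 4 ^ m" by (simp add: power_mult)
  finally show ?thesis by simp
qed

lemma prod_primes_between_le_binomial:
  "\<Prod>{p. prime p \<and> m + 1 < p \<and> p \<le> 2 * m + 1} \<le> (2 * m + 1 choose m)"
proof (rule prod_prime_divisors_le)
  fix p assume p: "p \<in> {p. prime p \<and> m + 1 < p \<and> p \<le> 2 * m + 1}"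
  then have "prime p" by simp
  have "fact m * fact (m + 1) * (2 * m + 1 choose m) = (fact (2 * m + 1) :: nat)"
    using binomial_fact_lemma[of m "2 * m + 1"] by (simp add: add.commute)
  moreover have "p dvd (fact (2 * m + 1) :: nat)"
    using p prime_dvd_fact_iff[OF \<open>prime p\<close>, of "2 * m + 1"] by (simp del: fact_Suc)
  moreover have "\<not> p dvd (fact m :: nat)" "\<not> p dvd (fact (m + 1) :: nat)"
    using p prime_dvd_fact_iff[OF \<open>prime p\<close>] by (auto simp del: fact_Suc)
  ultimately have "p dvd (2 * m + 1 choose m)"
    using \<open>prime p\<close> by (metis prime_dvd_mult_iff)
  then show "prime p \<and> p dvd (2 * m + 1 choose m)" using \<open>prime p\<close> by simp
qed (simp add: zero_less_binomial)

lemma prod_primes_le_four_power: "\<Prod>{p::nat. prime p \<and> p \<le> x} \<le> 4 ^ x"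
proof (induction x rule: less_induct)
  case (less x)
  consider "x \<le> 2" | "2 < x" "even x" | m where "x = 2 * m + 1" "1 \<le> m"
  proof -
    have "x \<le> 2 \<or> (2 < x \<and> even x) \<or> (\<exists>m. x = 2 * m + 1 \<and> 1 \<le> m)" by presburger
    then show ?thesis using that by blast
  qed
  then show ?case
  proof cases
    case 1
    then have "{p. prime p \<and> p \<le> x} = (if x < 2 then {} else {2})"
      by (auto dest: prime_ge_2_nat)
    then show ?thesis using 1 by auto
  next
    case 2
    then have "\<not> prime x" using prime_odd_nat by blast
    then have "{p. prime p \<and> p \<le> x} = {p. prime p \<and> p \<le> x - 1}"
    proof (intro Collect_cong iffI)
      fix p assume "prime p \<and> p \<le> x"
      then show "prime p \<and> p \<le> x - 1" using \<open>\<not> prime x\<close> by (cases "p = x") auto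
    qed auto
    then have "\<Prod>{p. prime p \<and> p \<le> x} \<le> 4 ^ (x - 1)" using less.IH[of "x - 1"] 2 by simp
    also have "\<dots> \<le> 4 ^ x" by (intro power_increasing) auto
    finally show ?thesis .
  next
    case 3
    have "{p. prime p \<and> p \<le> x}
        = {p. prime p \<and> p \<le> m + 1} \<union> {p. prime p \<and> m + 1 < p \<and> p \<le> 2 * m + 1}"
      using 3 by auto
    then have "\<Prod>{p. prime p \<and> p \<le> x}
        = \<Prod>{p. prime p \<and> p \<le> m + 1} * \<Prod>{p. prime p \<and> m + 1 < p \<and> p \<le> 2 * m + 1}"
      by (simp add: prod.union_disjoint[symmetric] disjoint_iff)
    also have "\<dots> \<le> 4 ^ (m + 1) * 4 ^ m"
      using less.IH[of "m + 1"] 3 prod_primes_between_le_binomial[of m] central_binomial_odd_le[of m]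
      by (intro mult_le_mono) auto
    also have "\<dots> = 4 ^ x" using 3 by (simp flip: power_add)
    finally show ?thesis .
  qed
qed

lemma prime_dvd_central_binomial_le:
  fixes p N :: nat
  assumes "prime p" and "p dvd (2 * N choose N)"
  shows "p \<le> 2 * N"
proof -
  have "fact N * fact N * (2 * N choose N) = (fact (2 * N) :: nat)"
    using binomial_fact_lemma[of N "2 * N"] by simp
  then have "(2 * N choose N) dvd fact (2 * N)" by (metis dvd_triv_right)
  then show ?thesis using assms prime_dvd_fact_iff dvd_trans by blast
qed

lemma prod_prime_power_factors_central_binomial_le:
  fixes N :: nat and S T :: "nat set"
  assumes "0 < N" and "\<And>p. p \<in> S \<Longrightarrow> prime p" and "S \<subseteq> T" and "finite T"
  shows "(\<Prod>p\<in>S. p ^ multiplicity p (2 * N choose N)) \<le> (2 * N) ^ card T"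
proof -
  have "(\<Prod>p\<in>S. p ^ multiplicity p (2 * N choose N)) \<le> (\<Prod>p\<in>S. 2 * N)"
    using assms(1,2) by (intro prod_mono) (auto simp: prime_power_multiplicity_central_binomial_le)
  also have "\<dots> = (2 * N) ^ card S" by (rule prod_constant)
  also have "\<dots> \<le> (2 * N) ^ card T"
    using card_mono[OF assms(4,3)] assms(1) by (intro power_increasing) auto
  finally show ?thesis .
qed

lemma prod_medium_prime_factors_central_binomial_le:
  fixes N :: nat
  defines "C \<equiv> 2 * N choose N"
  shows "(\<Prod>p\<in>{p\<in>prime_factors C. p \<le> N \<and> 2 * N < p * p}. p ^ multiplicity p C) \<le> 4 ^ (2 * N div 3)"
proof -
  define B where "B = {p\<in>prime_factors C. p \<le> N \<and> 2 * N < p * p}"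
  have B: "prime p" "0 < multiplicity p C" "p \<le> N" "2 * N < p * p" if "p \<in> B" for p
    using that by (auto simp: B_def prime_factors_multiplicity)
  have "(\<Prod>p\<in>B. p ^ multiplicity p C) \<le> \<Prod>B"
  proof (rule prod_mono)
    fix p assume "p \<in> B"
    then have "multiplicity p C \<le> 1"
      using B multiplicity_central_binomial_le_1[of p N] by (simp add: C_def)
    then show "0 \<le> p ^ multiplicity p C \<and> p ^ multiplicity p C \<le> p"
      using power_increasing[of "multiplicity p C" 1 p] prime_ge_1_nat B(1)[OF \<open>p \<in> B\<close>] by auto
  qed
  also have "\<dots> \<le> \<Prod>{p. prime p \<and> p \<le> 2 * N div 3}"
  proof (intro dvd_imp_le prod_dvd_prod_subset subsetI)
    fix p assume "p \<in> B"
    then have "2 < p" using B[of p] prime_ge_2_nat[of p] by (cases "p = 2") auto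
    then have "\<not> 2 * N < 3 * p"
      using B[OF \<open>p \<in> B\<close>] multiplicity_central_binomial_eq_0 by (auto simp: C_def)
    then show "p \<in> {p. prime p \<and> p \<le> 2 * N div 3}" using B[OF \<open>p \<in> B\<close>] by auto
  qed (auto simp: finite_nat_set_iff_bounded_le prime_gt_0_nat intro: prod_pos)
  also have "\<dots> \<le> 4 ^ (2 * N div 3)" by (rule prod_primes_le_four_power)
  finally show ?thesis by (simp add: B_def)
qed

lemma central_binomial_le_prime_powers:
  fixes N :: nat
  assumes "0 < N"
  shows "(2 * N choose N) \<le> (2 * N) ^ card {p. prime p \<and> p * p \<le> 2 * N} * 4 ^ (2 * N div 3)
           * (2 * N) ^ card {p. prime p \<and> N < p \<and> p \<le> 2 * N}"
proof -
  define C where "C = 2 * N choose N"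
  define v where "v p = multiplicity p C" for p
  define F where "F = prime_factors C"
  define A where "A = {p\<in>F. p \<le> N \<and> p * p \<le> 2 * N}"
  define B where "B = {p\<in>F. p \<le> N \<and> 2 * N < p * p}"
  define D where "D = {p\<in>F. N < p}"
  have "0 < C" unfolding C_def by (simp add: zero_less_binomial)
  have F: "prime p" "p \<le> 2 * N" if "p \<in> F" for p
    using that prime_dvd_central_binomial_le[of p N] \<open>0 < C\<close> by (auto simp: F_def C_def prime_factors_dvd)
  have "finite F" by (simp add: F_def)
  have "C = (\<Prod>p\<in>F. p ^ v p)"
    unfolding F_def v_def by (rule prime_factorization_nat[OF \<open>0 < C\<close>])
  also have "F = A \<union> B \<union> D" by (auto simp: A_def B_def D_def not_le)
  also have "(\<Prod>p\<in>A \<union> B \<union> D. p ^ v p) = (\<Prod>p\<in>A. p ^ v p) * (\<Prod>p\<in>B. p ^ v p) * (\<Prod>p\<in>D. p ^ v p)"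
    using \<open>finite F\<close> by (subst prod.union_disjoint; auto simp: A_def B_def D_def)+
  finally have C_eq: "C = (\<Prod>p\<in>A. p ^ v p) * (\<Prod>p\<in>B. p ^ v p) * (\<Prod>p\<in>D. p ^ v p)" .
  have small: "(\<Prod>p\<in>A. p ^ v p) \<le> (2 * N) ^ card {p. prime p \<and> p * p \<le> 2 * N}"
    unfolding v_def C_def
  proof (rule prod_prime_power_factors_central_binomial_le)
    have le: "p \<le> 2 * N" if "p * p \<le> 2 * N" for p :: nat using le_square[of p] that by linarith
    show "finite {p. prime p \<and> p * p \<le> 2 * N}"
      by (rule finite_subset[of _ "{..2 * N}"]) (auto dest: le)
  qed (use assms F in \<open>auto simp: A_def\<close>)
  have medium: "(\<Prod>p\<in>B. p ^ v p) \<le> 4 ^ (2 * N div 3)"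
    using prod_medium_prime_factors_central_binomial_le[of N] by (simp add: B_def F_def v_def C_def)
  have large: "(\<Prod>p\<in>D. p ^ v p) \<le> (2 * N) ^ card {p. prime p \<and> N < p \<and> p \<le> 2 * N}"
    unfolding v_def C_def
    by (rule prod_prime_power_factors_central_binomial_le) (use assms F in \<open>auto simp: D_def\<close>)
  show ?thesis using small medium large unfolding C_eq C_def[symmetric] by (intro mult_le_mono)
qed

lemma card_primes_square_le: "real (card {p::nat. prime p \<and> p * p \<le> x}) \<le> sqrt x"
proof -
  have "{p. prime p \<and> p * p \<le> x} \<subseteq> {1..nat \<lfloor>sqrt x\<rfloor>}"
  proof
    fix p assume p: "p \<in> {p. prime p \<and> p * p \<le> x}"
    then have "real p ^ 2 \<le> real x" by (simp add: power2_eq_square flip: of_nat_mult)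
    then have "p \<le> nat \<lfloor>sqrt x\<rfloor>" by (intro le_nat_floor real_le_rsqrt)
    then show "p \<in> {1..nat \<lfloor>sqrt x\<rfloor>}" using p prime_ge_1_nat by auto
  qed
  then have "card {p. prime p \<and> p * p \<le> x} \<le> nat \<lfloor>sqrt x\<rfloor>"
    using card_mono[of "{1..nat \<lfloor>sqrt x\<rfloor>}"] by fastforce
  then have "real (card {p. prime p \<and> p * p \<le> x}) \<le> real (nat \<lfloor>sqrt x\<rfloor>)"
    by (simp only: of_nat_le_iff)
  also have "\<dots> \<le> sqrt x" by simp
  finally show ?thesis .
qed

lemma one_plus_sqrt_mult_ln_le:
  fixes y :: real
  assumes "6561 \<le> y"
  shows "(1 + sqrt y) * ln y \<le> 5 / 36 * y"
proof -
  define z where "z = root 8 y"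
  have "0 < y" using assms by simp
  then have "0 < z" and y: "y = z ^ 8" by (simp_all add: z_def)
  have "3 \<le> z" unfolding z_def using real_root_le_iff[of 8 6561 y] assms by (simp add: real_root_pos_unique)
  have "y = (z ^ 4)\<^sup>2" by (simp add: y flip: power_mult)
  then have "sqrt y = \<bar>z ^ 4\<bar>" by (simp only: real_sqrt_abs)
  then have "sqrt y = z ^ 4" using \<open>0 < z\<close> by simp
  have "ln z \<le> 2 / 5 * z"
  proof -
    have "ln (z / exp 1) \<le> z / exp 1 - 1" using \<open>0 < z\<close> by (intro ln_le_minus_one) simp
    then have "ln z \<le> z / exp 1" using \<open>0 < z\<close> by (simp add: ln_div)
    also have "\<dots> \<le> z / (5 / 2)"
      using exp_lower_Taylor_quadratic[of 1] \<open>0 < z\<close> by (intro divide_left_mono) auto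
    finally show ?thesis by simp
  qed
  have "81 * z \<le> z ^ 4 * z" and "27 * z ^ 5 \<le> z ^ 3 * z ^ 5"
    using power_mono[OF \<open>3 \<le> z\<close>, of 4] power_mono[OF \<open>3 \<le> z\<close>, of 3] \<open>0 < z\<close>
    by (intro mult_right_mono; simp)+
  moreover have z_pow: "z ^ 5 = z ^ 4 * z" "z ^ 8 = z ^ 3 * z ^ 5" by (simp_all flip: power_add power_Suc2)
  ultimately have "81 * z \<le> z ^ 5" and "27 * z ^ 5 \<le> z ^ 8" by simp_all
  have "(1 + sqrt y) * ln y = 8 * (1 + z ^ 4) * ln z"
    unfolding \<open>sqrt y = z ^ 4\<close> using \<open>0 < z\<close> by (simp add: y ln_realpow)
  also have "\<dots> \<le> 8 * (1 + z ^ 4) * (2 / 5 * z)"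
    using \<open>ln z \<le> 2 / 5 * z\<close> \<open>0 < z\<close> by (intro mult_left_mono) auto
  also have "\<dots> = 16 / 5 * z + 16 / 5 * z ^ 5" by (simp add: z_pow(1) algebra_simps)
  also have "\<dots> \<le> 5 / 36 * z ^ 8" using \<open>81 * z \<le> z ^ 5\<close> \<open>27 * z ^ 5 \<le> z ^ 8\<close> \<open>0 < z\<close> by linarith
  finally show ?thesis by (simp add: y)
qed

lemma card_primes_between_lower_bound:
  fixes N :: nat
  assumes "3281 \<le> N"
  shows "N / 6 \<le> card {p. prime p \<and> N < p \<and> p \<le> 2 * N} * ln (2 * N)"
proof -
  define a where "a = card {p. prime p \<and> p * p \<le> 2 * N}"
  define \<pi> where "\<pi> = card {p. prime p \<and> N < p \<and> p \<le> 2 * N}"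
  define L where "L = ln (2 * real N)"
  have "0 < N" using assms by simp
  then have "0 < L" by (simp add: L_def)
  have "ln (4::real) = 2 * ln 2" using ln_realpow[of 2 2] by simp
  then have "4 / 3 \<le> ln (4::real)" using ln2_ge_two_thirds by linarith
  have "real (2 * N choose N) \<le> real ((2 * N) ^ a * 4 ^ (2 * N div 3) * (2 * N) ^ \<pi>)"
    unfolding a_def \<pi>_def using central_binomial_le_prime_powers[OF \<open>0 < N\<close>] by (simp only: of_nat_le_iff)
  also have "\<dots> = (2 * real N) ^ a * 4 ^ (2 * N div 3) * (2 * real N) ^ \<pi>" by simp
  finally have "ln (2 * N choose N) \<le> ln ((2 * real N) ^ a * 4 ^ (2 * N div 3) * (2 * real N) ^ \<pi>)"
    using \<open>0 < N\<close> by (subst ln_le_cancel_iff) (auto simp: zero_less_binomial)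
  also have "\<dots> = a * L + (2 * N div 3) * ln 4 + \<pi> * L"
    using \<open>0 < N\<close> by (simp add: L_def ln_mult ln_realpow algebra_simps)
  finally have upper: "ln (2 * N choose N) \<le> a * L + (2 * N div 3) * ln 4 + \<pi> * L" .
  have "N * ln 4 - L = ln (4 ^ N / (2 * real N))"
    using \<open>0 < N\<close> by (simp add: L_def ln_div ln_realpow)
  also have "\<dots> \<le> ln (2 * N choose N)"
    using central_binomial_lower_bound[OF \<open>0 < N\<close>] \<open>0 < N\<close> by (subst ln_le_cancel_iff) auto
  finally have lower: "N * ln 4 - L \<le> ln (2 * N choose N)" .
  have "a * L \<le> sqrt (2 * real N) * L"
    using card_primes_square_le[of "2 * N"] \<open>0 < L\<close> by (simp add: a_def)
  moreover have "real (2 * N div 3) * ln 4 \<le> 2 * N / 3 * ln 4" by (intro mult_right_mono) (linarith, simp)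
  moreover have "N / 3 * (4 / 3) \<le> N / 3 * ln 4"
    using \<open>4 / 3 \<le> ln 4\<close> by (intro mult_left_mono) auto
  moreover have "(1 + sqrt (2 * real N)) * L \<le> 5 / 36 * (2 * real N)"
    unfolding L_def using assms by (intro one_plus_sqrt_mult_ln_le) simp
  moreover have "(1 + sqrt (2 * real N)) * L = L + sqrt (2 * real N) * L" by (simp add: algebra_simps)
  ultimately have "N / 6 \<le> \<pi> * L" using upper lower by linarith
  then show ?thesis by (simp add: \<pi>_def L_def)
qed

lemma exists_prime_between_of_chain:
  fixes P :: real
  assumes "successively (\<lambda>a b. b \<le> 2 * a) ps" and "\<forall>p\<in>set ps. prime p" and "ps \<noteq> []"
    and "real (hd ps) \<le> P" and "P \<le> real (last ps)"
  shows "\<exists>p. prime p \<and> P \<le> real p \<and> real p \<le> 2 * P"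
  using assms
proof (induction ps)
  case (Cons a ps)
  show ?case
  proof (cases "ps = []")
    case True
    then show ?thesis using Cons.prems by (intro exI[of _ a]) auto
  next
    case False
    show ?thesis
    proof (cases "P \<le> real (hd ps)")
      case True
      have "real (hd ps) \<le> 2 * real a" using Cons.prems(1) False by (simp add: successively_Cons)
      then show ?thesis using True False Cons.prems by (intro exI[of _ "hd ps"]) auto
    next
      case False
      then show ?thesis
        using Cons.IH Cons.prems \<open>ps \<noteq> []\<close> by (auto simp: successively_Cons)
    qed
  qed
qed simp

lemma finite_primes_in: "finite (primes_in P)"
  unfolding primes_in_def
  by (rule finite_subset[of _ "{..nat \<lfloor>2 * P\<rfloor>}"]) (auto intro: le_nat_floor)

lemma exists_prime_between_small:
  fixes P :: real
  assumes "2 \<le> P" and "P \<le> 3301"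
  shows "\<exists>p. prime p \<and> P \<le> real p \<and> real p \<le> 2 * P"
proof -
  define ps :: "nat list" where "ps = [2, 3, 5, 7, 13, 23, 43, 83, 163, 317, 631, 1259, 2503, 3301]"
  have "prime (3::nat)" by (rule prime_nat_by_trial_division[where b = 2]) (simp_all add: upt_rec)
  moreover have "prime (5::nat)" by (rule prime_nat_by_trial_division[where b = 3]) (simp_all add: upt_rec)
  moreover have "prime (7::nat)" by (rule prime_nat_by_trial_division[where b = 3]) (simp_all add: upt_rec)
  moreover have "prime (13::nat)" by (rule prime_nat_by_trial_division[where b = 4]) (simp_all add: upt_rec)
  moreover have "prime (23::nat)" by (rule prime_nat_by_trial_division[where b = 5]) (simp_all add: upt_rec)
  moreover have "prime (43::nat)" by (rule prime_nat_by_trial_division[where b = 7]) (simp_all add: upt_rec)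
  moreover have "prime (83::nat)" by (rule prime_nat_by_trial_division[where b = 10]) (simp_all add: upt_rec)
  moreover have "prime (163::nat)" by (rule prime_nat_by_trial_division[where b = 13]) (simp_all add: upt_rec)
  moreover have "prime (317::nat)" by (rule prime_nat_by_trial_division[where b = 18]) (simp_all add: upt_rec)
  moreover have "prime (631::nat)" by (rule prime_nat_by_trial_division[where b = 26]) (simp_all add: upt_rec)
  moreover have "prime (1259::nat)" by (rule prime_nat_by_trial_division[where b = 36]) (simp_all add: upt_rec)
  moreover have "prime (2503::nat)" by (rule prime_nat_by_trial_division[where b = 51]) (simp_all add: upt_rec)
  moreover have "prime (3301::nat)" by (rule prime_nat_by_trial_division[where b = 58]) (simp_all add: upt_rec)
  ultimately have primes: "\<forall>p\<in>set ps. prime p" by (simp add: ps_def del: prime_nat_numeral_eq)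
  show ?thesis
    by (rule exists_prime_between_of_chain[OF _ primes]) (use assms in \<open>simp_all add: ps_def\<close>)
qed

lemma card_primes_in_lower_bound:
  fixes P :: real
  assumes "2 \<le> P"
  shows "P \<le> 7000 * card (primes_in P) * ln P"
proof (cases "P \<le> 3301")
  case True
  have "ln 2 \<le> ln P" using assms by simp
  obtain p where "prime p" "P \<le> real p" "real p \<le> 2 * P"
    using exists_prime_between_small[OF assms True] by blast
  then have "p \<in> primes_in P" by (simp add: primes_in_def)
  then have "1 \<le> card (primes_in P)"
    using finite_primes_in by (auto simp: Suc_le_eq card_gt_0_iff)
  moreover have "2 / 3 \<le> ln P" using \<open>ln 2 \<le> ln P\<close> ln2_ge_two_thirds by linarith
  ultimately have "7000 * 1 * (2 / 3) \<le> 7000 * card (primes_in P) * ln P"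
    by (intro mult_mono) auto
  then show ?thesis using True by linarith
next
  case False
  define N where "N = nat \<lfloor>P\<rfloor>"
  have "real N = of_int \<lfloor>P\<rfloor>" using assms by (simp add: N_def)
  then have N: "real N \<le> P" "P < real N + 1" by linarith+
  then have "3300 < real N" using False by linarith
  then have "3301 \<le> N" by simp
  have "{p. prime p \<and> N < p \<and> p \<le> 2 * N} \<subseteq> primes_in P"
  proof
    fix p assume p: "p \<in> {p. prime p \<and> N < p \<and> p \<le> 2 * N}"
    then have "real (N + 1) \<le> real p" "real p \<le> real (2 * N)" by (simp_all only: of_nat_le_iff) auto
    then show "p \<in> primes_in P" using p N by (auto simp: primes_in_def)
  qed
  then have card_le: "card {p. prime p \<and> N < p \<and> p \<le> 2 * N} \<le> card (primes_in P)"
    by (intro card_mono finite_primes_in)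
  have "2 * P \<le> P * P" using assms by (intro mult_right_mono) auto
  then have "2 * real N \<le> P * P" using N by linarith
  then have "ln (2 * real N) \<le> ln (P * P)" using \<open>3300 < real N\<close> by (intro ln_mono) auto
  then have "ln (2 * real N) \<le> 2 * ln P" using assms by (simp add: ln_mult)
  have "P / 12 \<le> N / 6" using N \<open>3300 < real N\<close> by linarith
  also have "\<dots> \<le> card {p. prime p \<and> N < p \<and> p \<le> 2 * N} * ln (2 * N)"
    by (rule card_primes_between_lower_bound) (use \<open>3301 \<le> N\<close> in simp)
  also have "\<dots> \<le> card (primes_in P) * (2 * ln P)"
    using card_le \<open>ln (2 * real N) \<le> 2 * ln P\<close> \<open>3301 \<le> N\<close> by (intro mult_mono) auto
  finally show ?thesis using assms by simp
qed

section \<open>Heavy sums in residue classes\<close>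

lemma card_large_prime_divisors_le:
  fixes D :: nat and P :: real
  assumes "0 < D" and "0 < P" and "\<And>p. p \<in> S \<Longrightarrow> prime p \<and> P \<le> p \<and> p dvd D"
  shows "card S * ln P \<le> ln D"
proof -
  have "\<Prod>S \<le> D" by (rule prod_prime_divisors_le) (use assms in auto)
  have "P ^ card S = (\<Prod>p\<in>S. P)" by simp
  also have "\<dots> \<le> (\<Prod>p\<in>S. real p)" using assms by (intro prod_mono) auto
  also have "\<dots> = real (\<Prod>S)" by simp
  also have "\<dots> \<le> real D" using \<open>\<Prod>S \<le> D\<close> by (simp only: of_nat_le_iff)
  finally have "ln (P ^ card S) \<le> ln D" using assms by (intro ln_mono) auto
  then show ?thesis using assms by (simp add: ln_realpow)
qed

lemma card_primes_in_congruent_le: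
  fixes x y n :: nat and P :: real
  assumes "x \<noteq> y" and "x < 2 ^ n" and "y < 2 ^ n" and "1 < P"
  shows "card {p\<in>primes_in P. x mod p = y mod p} \<le> n * ln 2 / ln P"
proof -
  define D where "D = (if x < y then y - x else x - y)"
  have "0 < D" "D < 2 ^ n" using assms by (auto simp: D_def)
  have "card {p\<in>primes_in P. x mod p = y mod p} * ln P \<le> ln D"
  proof (rule card_large_prime_divisors_le)
    fix p assume "p \<in> {p\<in>primes_in P. x mod p = y mod p}"
    then show "prime p \<and> P \<le> p \<and> p dvd D"
      using mod_eq_dvd_iff_nat[of x y p] mod_eq_dvd_iff_nat[of y x p] by (auto simp: primes_in_def D_def)
  qed (use assms \<open>0 < D\<close> in auto)
  also have "\<dots> \<le> ln (2 ^ n)" using \<open>0 < D\<close> \<open>D < 2 ^ n\<close> by (intro ln_mono) auto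
  also have "\<dots> = n * ln 2" by (simp add: ln_realpow)
  finally show ?thesis using assms by (simp add: field_simps)
qed

definition bucket :: "nat set \<Rightarrow> nat \<Rightarrow> nat \<Rightarrow> nat set" where
  "bucket X q r = {t\<in>X. t mod q = r}"

definition collisions :: "nat set \<Rightarrow> nat \<Rightarrow> nat" where
  "collisions X q = card {(x, y)\<in>X \<times> X. x mod q = y mod q}"

lemma sum_card_bucket:
  assumes "finite X" and "0 < q"
  shows "(\<Sum>r<q. card (bucket X q r)) = card X"
proof -
  have "X = (\<Union>r<q. bucket X q r)" using assms(2) by (auto simp: bucket_def)
  moreover have "card (\<Union>r<q. bucket X q r) = (\<Sum>r<q. card (bucket X q r))"
    using assms(1) by (intro card_UN_disjoint) (auto simp: bucket_def)
  ultimately show ?thesis by simp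
qed

lemma collisions_eq_sum_card_bucket_squared:
  assumes "finite X" and "0 < q"
  shows "collisions X q = (\<Sum>r<q. card (bucket X q r) ^ 2)"
proof -
  have "{(x, y)\<in>X \<times> X. x mod q = y mod q} = (\<Union>r<q. bucket X q r \<times> bucket X q r)"
    using assms(2) by (auto simp: bucket_def)
  moreover have "card (\<Union>r<q. bucket X q r \<times> bucket X q r) = (\<Sum>r<q. card (bucket X q r \<times> bucket X q r))"
    using assms(1) by (intro card_UN_disjoint) (auto simp: bucket_def)
  ultimately show ?thesis by (simp add: collisions_def card_cartesian_product power2_eq_square)
qed

lemma card_le_collisions:
  assumes "finite X"
  shows "card X \<le> collisions X q"
proof -
  have "card X = card ((\<lambda>x. (x, x)) ` X)" by (simp add: card_image inj_on_def)
  also have "\<dots> \<le> collisions X q"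
    unfolding collisions_def by (rule card_mono, rule finite_subset[of _ "X \<times> X"]) (use assms in auto)
  finally show ?thesis .
qed

lemma card_heavy_buckets_lower_bound:
  fixes X :: "nat set" and q k :: nat
  assumes "finite X" and "0 < q" and "1 \<le> k" and "2 * q * (k - 1) \<le> card X"
  shows "card X ^ 2 \<le> 4 * card {r. r < q \<and> k \<le> card (bucket X q r)} * collisions X q"
proof -
  define R where "R = {r. r < q \<and> k \<le> card (bucket X q r)}"
  define b where "b r = card (bucket X q r)" for r
  have "R \<subseteq> {..<q}" by (auto simp: R_def)
  have "card X = (\<Sum>r<q. b r)" using sum_card_bucket[OF assms(1,2)] by (simp add: b_def)
  also have "\<dots> = (\<Sum>r\<in>R. b r) + (\<Sum>r\<in>{..<q} - R. b r)"
    using sum.subset_diff[OF \<open>R \<subseteq> {..<q}\<close>] by (simp add: add.commute)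
  also have "(\<Sum>r\<in>{..<q} - R. b r) \<le> (\<Sum>r\<in>{..<q} - R. k - 1)"
    by (intro sum_mono) (auto simp: R_def b_def)
  also have "\<dots> \<le> q * (k - 1)" using card_mono[of "{..<q}" "{..<q} - R"] by simp
  finally have "card X \<le> 2 * (\<Sum>r\<in>R. b r)" using assms(4) by linarith
  then have "real (card X) \<le> real (2 * (\<Sum>r\<in>R. b r))" by (simp only: of_nat_le_iff)
  then have "real (card X) \<le> 2 * (\<Sum>r\<in>R. real (b r))" by simp
  then have "real (card X) ^ 2 \<le> (2 * (\<Sum>r\<in>R. real (b r))) ^ 2" by (rule power_mono) simp
  then have "real (card X ^ 2) \<le> 4 * (\<Sum>r\<in>R. real (b r)) ^ 2" by (simp add: power_mult_distrib)
  also have "(\<Sum>r\<in>R. real (b r)) ^ 2 \<le> (\<Sum>r\<in>R. 1\<^sup>2) * (\<Sum>r\<in>R. (real (b r))\<^sup>2)"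
    using Cauchy_Schwarz_ineq_sum[of "\<lambda>_. 1" "\<lambda>r. real (b r)" R] by simp
  also have "(\<Sum>r\<in>R. (real (b r))\<^sup>2) \<le> (\<Sum>r<q. (real (b r))\<^sup>2)"
    using \<open>R \<subseteq> {..<q}\<close> by (intro sum_mono2) auto
  also have "\<dots> = real (collisions X q)"
    using collisions_eq_sum_card_bucket_squared[OF assms(1,2)] by (simp add: b_def)
  finally have "real (card X ^ 2) \<le> real (4 * card R * collisions X q)" by (simp add: mult_left_mono)
  then show ?thesis by (simp only: of_nat_le_iff R_def)
qed

lemma sum_collisions_primes_in_le:
  fixes X :: "nat set" and n :: nat and P :: real
  assumes "finite X" and "X \<subseteq> {..<2 ^ n}" and "1 < P"
  shows "(\<Sum>p\<in>primes_in P. real (collisions X p))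
           \<le> card X * card (primes_in P) + card X ^ 2 * (n * ln 2 / ln P)"
proof -
  define L where "L = n * ln 2 / ln P"
  have "0 \<le> L" using assms(3) by (simp add: L_def)
  have collisions_sum: "real (collisions X p) = (\<Sum>x\<in>X. \<Sum>y\<in>X. if x mod p = y mod p then 1 else 0)" for p
  proof -
    have "{(x, y)\<in>X \<times> X. x mod p = y mod p} = {z\<in>X \<times> X. fst z mod p = snd z mod p}" by auto
    then have "real (collisions X p) = (\<Sum>z\<in>X \<times> X. if fst z mod p = snd z mod p then 1 else 0)"
      unfolding collisions_def using assms(1) by (simp add: sum.inter_filter[symmetric])
    then show ?thesis by (simp add: sum.cartesian_product case_prod_beta)
  qed
  have "(\<Sum>p\<in>primes_in P. real (collisions X p))
      = (\<Sum>x\<in>X. \<Sum>p\<in>primes_in P. \<Sum>y\<in>X. if x mod p = y mod p then 1 else 0)"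
    unfolding collisions_sum by (rule sum.swap)
  also have "\<dots> = (\<Sum>x\<in>X. \<Sum>y\<in>X. \<Sum>p\<in>primes_in P. if x mod p = y mod p then 1 else 0)"
    by (intro sum.cong refl sum.swap)
  also have "\<dots> = (\<Sum>x\<in>X. \<Sum>y\<in>X. real (card {p\<in>primes_in P. x mod p = y mod p}))"
    by (simp add: sum.inter_filter[symmetric] finite_primes_in)
  also have "\<dots> \<le> (\<Sum>x\<in>X. \<Sum>y\<in>X. (if x = y then real (card (primes_in P)) else 0) + L)"
  proof (intro sum_mono)
    fix x y assume "x \<in> X" "y \<in> X"
    show "real (card {p\<in>primes_in P. x mod p = y mod p}) \<le> (if x = y then real (card (primes_in P)) else 0) + L"
    proof (cases "x = y")
      case True
      then show ?thesis using \<open>0 \<le> L\<close> card_mono[OF finite_primes_in, of "{p\<in>primes_in P. x mod p = y mod p}"]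
        by auto
    next
      case False
      then show ?thesis
        using card_primes_in_congruent_le[of x y n P] assms \<open>x \<in> X\<close> \<open>y \<in> X\<close> by (auto simp: L_def)
    qed
  qed
  also have "\<dots> = card X * card (primes_in P) + card X ^ 2 * L"
    using assms(1) by (simp add: sum.distrib sum.delta power2_eq_square algebra_simps)
  finally show ?thesis by (simp add: L_def)
qed

lemma card_squared_div_sum_le_sum:
  fixes H Q :: "'a \<Rightarrow> real"
  assumes "finite I" and "0 \<le> c" and "\<And>i. i \<in> I \<Longrightarrow> 0 < Q i" and "\<And>i. i \<in> I \<Longrightarrow> c / Q i \<le> H i"
  shows "c * real (card I) ^ 2 / (\<Sum>i\<in>I. Q i) \<le> (\<Sum>i\<in>I. H i)"
proof (cases "I = {}")
  case False
  have "0 < (\<Sum>i\<in>I. Q i)" using assms(1,3) False by (intro sum_pos) auto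
  have "real (card I) ^ 2 = (\<Sum>i\<in>I. sqrt (Q i) * (1 / sqrt (Q i))) ^ 2"
    using assms(3) by (simp add: less_imp_neq[symmetric])
  also have "\<dots> \<le> (\<Sum>i\<in>I. (sqrt (Q i))\<^sup>2) * (\<Sum>i\<in>I. (1 / sqrt (Q i))\<^sup>2)"
    by (rule Cauchy_Schwarz_ineq_sum)
  also have "\<dots> = (\<Sum>i\<in>I. Q i) * (\<Sum>i\<in>I. 1 / Q i)"
    using assms(3) by (simp add: power_divide less_imp_le)
  finally have "c * real (card I) ^ 2 / (\<Sum>i\<in>I. Q i) \<le> c * (\<Sum>i\<in>I. 1 / Q i)"
    using \<open>0 < (\<Sum>i\<in>I. Q i)\<close> assms(2) by (simp add: divide_le_eq mult_left_mono mult.commute mult.left_commute)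
  also have "\<dots> = (\<Sum>i\<in>I. c / Q i)" by (simp add: sum_distrib_left)
  also have "\<dots> \<le> (\<Sum>i\<in>I. H i)" using assms(4) by (rule sum_mono)
  finally show ?thesis .
qed simp
lemma card_heavy_residues_div_prime_ge:
  fixes X :: "nat set" and m p :: nat and P :: real
  assumes "finite X" and "1 \<le> m" and "m \<le> card X" and "2 \<le> P" and "p \<in> primes_in P"
  defines "k \<equiv> nat \<lceil>m / (4 * P)\<rceil>"
  shows "real (card X) ^ 2 / (8 * P) / collisions X p \<le> card {r. r < p \<and> k \<le> card (bucket X p r)} / p"
proof -
  define H where "H = card {r. r < p \<and> k \<le> card (bucket X p r)}"
  have "prime p" "P \<le> p" "p \<le> 2 * P" using assms(5) by (simp_all add: primes_in_def)
  have "0 < m / (4 * P)" using assms(2,4) by simp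
  then have "1 \<le> k" and "real k - 1 \<le> m / (4 * P)" by (simp_all add: k_def) linarith
  have "0 < collisions X p" using card_le_collisions[OF assms(1), of p] assms(2,3) by simp
  have "2 * real p * (real k - 1) \<le> (4 * P) * (m / (4 * P))"
    by (rule mult_mono) (use \<open>p \<le> 2 * P\<close> \<open>real k - 1 \<le> m / (4 * P)\<close> \<open>1 \<le> k\<close> in auto)
  also have "\<dots> = m" using assms(4) by simp
  finally have "real (2 * p * (k - 1)) \<le> real (card X)" using \<open>1 \<le> k\<close> assms(3) by (simp add: of_nat_diff)
  then have "card X ^ 2 \<le> 4 * H * collisions X p"
    unfolding H_def using \<open>1 \<le> k\<close> prime_gt_0_nat[OF \<open>prime p\<close>] assms(1)
    by (intro card_heavy_buckets_lower_bound) (simp_all only: of_nat_le_iff)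
  then have "real (card X) ^ 2 \<le> 4 * H * real (collisions X p)"
    by (metis of_nat_le_iff of_nat_mult of_nat_numeral of_nat_power)
  then have "real (card X) ^ 2 / (8 * P) / collisions X p \<le> H / (2 * P)"
    using \<open>0 < collisions X p\<close> assms(4) by (simp add: field_simps)
  also have "\<dots> \<le> H / p" using \<open>P \<le> p\<close> \<open>p \<le> 2 * P\<close> assms(4) by (intro divide_left_mono) auto
  finally show ?thesis by (simp add: H_def)
qed

lemma mult_ln_2_div_ln_le_card_primes_in:
  fixes P :: real and n :: nat
  assumes "2 \<le> P"
  shows "P * (n * ln 2 / ln P) \<le> 7000 * card (primes_in P) * n"
proof -
  have "0 < ln P" using assms by simp
  have "n * ln 2 \<le> n" using ln_2_less_1 by (intro mult_left_le) auto
  moreover have "P / ln P \<le> 7000 * real (card (primes_in P))"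
    using card_primes_in_lower_bound[OF assms] \<open>0 < ln P\<close> by (simp add: divide_le_eq)
  ultimately have "n * ln 2 * (P / ln P) \<le> n * (7000 * real (card (primes_in P)))"
    by (rule mult_mono) (use \<open>0 < ln P\<close> assms in auto)
  then show ?thesis by (simp add: field_simps)
qed

lemma heavy_bucket_fraction_lower_bound:
  fixes X :: "nat set" and n m :: nat and P :: real
  assumes "finite X" and "X \<subseteq> {..<2 ^ n}" and "1 \<le> n" and "m \<le> card X"
    and "2 \<le> P" and "P \<le> 2 * m"
  shows "1 / (56016 * n) \<le>
    (\<Sum>p\<in>primes_in P. card {r. r < p \<and> nat \<lceil>m / (4 * P)\<rceil> \<le> card (bucket X p r)} / p)
      / card (primes_in P)"
proof -
  define M where "M = real (card X)"
  define \<pi> where "\<pi> = real (card (primes_in P))"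
  define L where "L = n * ln 2 / ln P"
  define S where "S = (\<Sum>p\<in>primes_in P. real (collisions X p))"
  define T where "T = (\<Sum>p\<in>primes_in P. card {r. r < p \<and> nat \<lceil>m / (4 * P)\<rceil> \<le> card (bucket X p r)} / p)"
  have "1 \<le> m" using assms(5,6) by simp
  then have "1 \<le> M" "P \<le> 2 * M" using assms(4,6) by (simp_all add: M_def)
  have "0 < \<pi> * ln P" using card_primes_in_lower_bound[OF assms(5)] assms(5) by (simp add: \<pi>_def)
  then have "0 < \<pi>" using assms(5) by (simp add: zero_less_mult_iff)
  have collisions_pos: "0 < collisions X p" for p
    using card_le_collisions[OF assms(1), of p] \<open>1 \<le> M\<close> by (simp add: M_def)
  then have "0 < S" unfolding S_def using \<open>0 < \<pi>\<close> by (intro sum_pos finite_primes_in) (auto simp: \<pi>_def)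
  have "M\<^sup>2 / (8 * P) * \<pi>\<^sup>2 / S \<le> T"
    unfolding T_def S_def \<pi>_def M_def
    using card_heavy_residues_div_prime_ge[OF assms(1) \<open>1 \<le> m\<close> assms(4,5)] collisions_pos assms(5)
    by (intro card_squared_div_sum_le_sum finite_primes_in) auto
  have "8 * P * S \<le> 8 * P * (M * \<pi> + M\<^sup>2 * L)"
    using sum_collisions_primes_in_le[OF assms(1,2)] assms(5)
    by (intro mult_left_mono) (simp_all add: S_def M_def \<pi>_def L_def)
  also have "\<dots> = 8 * P * M * \<pi> + 8 * M\<^sup>2 * (P * L)" by (simp add: algebra_simps)
  also have "\<dots> \<le> 16 * M\<^sup>2 * \<pi> * n + 56000 * M\<^sup>2 * \<pi> * n"
  proof (rule add_mono)
    have "8 * P * M * \<pi> \<le> 8 * (2 * M) * M * \<pi>"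
      using \<open>P \<le> 2 * M\<close> \<open>1 \<le> M\<close> \<open>0 < \<pi>\<close> by (intro mult_right_mono) auto
    also have "\<dots> \<le> 16 * M\<^sup>2 * \<pi> * n"
      using \<open>0 < \<pi>\<close> assms(3) mult_left_mono[of 1 "real n" "16 * M\<^sup>2 * \<pi>"] by (simp add: power2_eq_square)
    finally show "8 * P * M * \<pi> \<le> 16 * M\<^sup>2 * \<pi> * n" .
    show "8 * M\<^sup>2 * (P * L) \<le> 56000 * M\<^sup>2 * \<pi> * n"
      using mult_left_mono[OF mult_ln_2_div_ln_le_card_primes_in[OF assms(5), of n], of "8 * M\<^sup>2"]
      by (simp add: L_def \<pi>_def mult_ac)
  qed
  finally have "\<pi> / (56016 * n) \<le> M\<^sup>2 / (8 * P) * \<pi>\<^sup>2 / S"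
    using \<open>0 < S\<close> \<open>0 < \<pi>\<close> \<open>1 \<le> M\<close> assms(3,5) by (simp add: field_simps power2_eq_square)
  also have "\<dots> \<le> T" by fact
  finally show ?thesis using \<open>0 < \<pi>\<close> by (simp add: T_def \<pi>_def field_simps)
qed

lemma freq_pos_imp_le_sum:
  assumes "0 < freq n w t"
  shows "t \<le> (\<Sum>i=1..n. w i)"
proof -
  obtain S where "S \<subseteq> {1..n}" "wsum w S = t" using assms by (auto simp: freq_def card_gt_0_iff)
  then show ?thesis unfolding wsum_def by (auto intro: sum_mono2)
qed

lemma heavy_count_eq_card_bucket:
  assumes "0 < h"
  shows "heavy_count n w p r h = card (bucket {t. h \<le> freq n w t} p r)"
proof -
  have "{S. S \<subseteq> {1..n} \<and> wsum w S mod p = r \<and> wsum w S = t}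
      = (if t mod p = r then {S. S \<subseteq> {1..n} \<and> wsum w S = t} else {})" for t
    by auto
  then show ?thesis using assms
    by (simp add: heavy_count_def bucket_def freq_def conj_commute cong: conj_cong)
qed

theorem lemma3p6:
  shows "\<exists>c::real. c > 0 \<and>
    (\<forall>(n::nat) (w::nat \<Rightarrow> nat) (\<Delta>::real) (j::nat) (P::real).
      (0 < w 1) \<longrightarrow> (\<forall>i\<in>{1..n}. \<forall>i'\<in>{1..n}. i < i' \<longrightarrow> w i < w i') \<longrightarrow>
      (\<Sum>i=1..n. w i) < 2^n - 1 \<longrightarrow>
      2 powr (real n / 2) \<le> \<Delta> \<longrightarrow> \<Delta> \<le> real (dpar n w) \<longrightarrow> dpar n w < 2^n \<longrightarrow>
      j < n \<longrightarrow>
      real (card {t. freq n w t > 2^j}) > \<Delta> / (2^(j+1) * real n) \<longrightarrow>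
      (let h = 2^j + 1;
           m = nat \<lceil>\<Delta> / (2^(j+1) * real n)\<rceil>;
           k = nat \<lceil>real m / (4 * P)\<rceil>
       in 2 \<le> P \<longrightarrow> P \<le> 2 * real m \<longrightarrow>
          success_prob n w P h k \<ge> c / real n))"
proof (intro exI[of _ "1 / 56016"] conjI allI impI)
  fix n w \<Delta> j and P :: real
  assume sum_w: "(\<Sum>i=1..n. w i) < 2^n - 1" and "j < n"
    and many_heavy: "real (card {t. freq n w t > 2^j}) > \<Delta> / (2^(j+1) * real n)"
  define X where "X = {t. 2 ^ j + 1 \<le> freq n w t}"
  have "X \<subseteq> {..<2 ^ n}"
  proof
    fix t assume "t \<in> X"
    then have "t \<le> (\<Sum>i=1..n. w i)" by (intro freq_pos_imp_le_sum) (simp add: X_def)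
    then show "t \<in> {..<2 ^ n}" using sum_w by simp
  qed
  then have "finite X" by (rule finite_subset) simp
  have "\<Delta> / (2^(j+1) * real n) \<le> card X" using many_heavy by (simp add: X_def Suc_le_eq)
  then have "nat \<lceil>\<Delta> / (2^(j+1) * real n)\<rceil> \<le> card X" by (simp add: nat_le_iff ceiling_le_iff)
  then show "let h = 2^j + 1;
           m = nat \<lceil>\<Delta> / (2^(j+1) * real n)\<rceil>;
           k = nat \<lceil>real m / (4 * P)\<rceil>
       in 2 \<le> P \<longrightarrow> P \<le> 2 * real m \<longrightarrow> success_prob n w P h k \<ge> 1 / 56016 / real n"
    using heavy_bucket_fraction_lower_bound[OF \<open>finite X\<close> \<open>X \<subseteq> {..<2 ^ n}\<close>] \<open>j < n\<close>
    by (simp add: Let_def success_prob_def heavy_count_eq_card_bucket X_def)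
qed simp

end
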